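(* Let $\nu_n$ and $\nu_n'$ be two neighborhood systems on $N_n$ such that $\nu_n$ is weakly finer than $\nu_n'$, i.e. $\nu_n(i)\subset\nu_n'(i)$ for every $i\in N_n$. Suppose that $\nu_n$ is undirected, and that a triangular array of sub-$\sigma$-fields $\{\mathcal{F}_i\}_{i\in N_n}$ of $\mathcal{F}$ is CND with respect to $(\nu_n,\mathcal{M})$ for some array of sub-$\sigma$-fields $\mathcal{M}=\{\mathcal{M}_i\}_{i\in N_n}$. Then $\{\mathcal{F}_i\}_{i\in N_n}$ is CND with respect to $(\nu_n',\mathcal{M})$.
   Context: Let $(\Omega,\mathcal{F},P)$ be a probability space and $N_n$ a finite set with $|N_n|=n$. A neighborhood system on $N_n$ is a map $\nu_n:N_n\to 2^{N_n}$ with $i\notin\nu_n(i)$ for all $i\in N_n$. It is undirected if $i\in\nu_n(j)$ implies $j\in\nu_n(i)$ for all $i,j\in N_n$. For $A\subset N_n$ let $\bar\nu_n(A)=\left(\bigcup_{i\in A}\nu_n(i)\right)\cup A$ and $\nu_n(A)=\bar\nu_n(A)\setminus A$. For an array of sub-$\sigma$-fields $\{\mathcal{M}_i\}_{i\in N_n}$ and $A\subset N_n$, $\mathcal{M}_A$ denotes the smallest $\sigma$-field containing all $\mathcal{M}_i$, $i\in A$ (the trivial $\sigma$-field if $A=\varnothing$); the same notation is used for other arrays (e.g. $\mathcal{F}_A$), and $\mathcal{G}_1\vee\mathcal{G}_2$ denotes the smallest $\sigma$-field containing $\mathcal{G}_1$ and $\mathcal{G}_2$. Definition (CND): given a neighborhood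 system $\nu_n$ and $\mathcal{M}=\{\mathcal{M}_i\}_{i\in N_n}$, the $\sigma$-fields $\{\mathcal{F}_i\}_{i\in N_n'}$ for a subset $N_n'\subset N_n$ are conditionally neighborhood dependent (CND) with respect to $(\nu_n,\mathcal{M})$ if for any $A,B\subset N_n'$ with $A\subset N_n'\setminus\bar\nu_n(B)$ and $B\subset N_n'\setminus\bar\nu_n(A)$, the $\sigma$-fields $\mathcal{F}_A\vee\mathcal{M}_A$ and $\mathcal{F}_B\vee\mathcal{M}_B$ are conditionally independent given $\mathcal{M}_{\nu_n(A)}$. Here $N_n'=N_n$. *)

theory Defs
  imports "HOL-Probability.Probability"
begin

definition nbhd_system :: "'i set \<Rightarrow> ('i \<Rightarrow> 'i set) \<Rightarrow> bool" where
  "nbhd_system N nu \<longleftrightarrow> (\<forall>i\<in>N. nu i \<subseteq> N \<and> i \<notin> nu i)"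

definition undirected :: "'i set \<Rightarrow> ('i \<Rightarrow> 'i set) \<Rightarrow> bool" where
  "undirected N nu \<longleftrightarrow> (\<forall>i\<in>N. \<forall>j\<in>N. i \<in> nu j \<longrightarrow> j \<in> nu i)"

definition nbar :: "('i \<Rightarrow> 'i set) \<Rightarrow> 'i set \<Rightarrow> 'i set" where
  "nbar nu A = (\<Union>i\<in>A. nu i) \<union> A"

definition nset :: "('i \<Rightarrow> 'i set) \<Rightarrow> 'i set \<Rightarrow> 'i set" where
  "nset nu A = nbar nu A - A"

definition gen_sigma :: "'a measure \<Rightarrow> ('i \<Rightarrow> 'a measure) \<Rightarrow> 'i set \<Rightarrow> 'a measure" where
  "gen_sigma M F A = sigma (space M) (\<Union>i\<in>A. sets (F i))"

definition gen_sigma2 :: "'a measure \<Rightarrow> ('i \<Rightarrow> 'a measure) \<Rightarrow> ('i \<Rightarrow> 'a measure) \<Rightarrow> 'i set \<Rightarrow> 'a measure" where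
  "gen_sigma2 M F G A = sigma (space M) (\<Union>i\<in>A. sets (F i) \<union> sets (G i))"

definition cond_indep :: "'a measure \<Rightarrow> 'a measure \<Rightarrow> 'a measure \<Rightarrow> 'a measure \<Rightarrow> bool" where
  "cond_indep M G1 G2 H \<longleftrightarrow>
     (\<forall>A\<in>sets G1. \<forall>B\<in>sets G2.
        AE x in M. real_cond_exp M H (indicator (A \<inter> B)) x
                   = real_cond_exp M H (indicator A) x * real_cond_exp M H (indicator B) x)"

definition CND :: "'a measure \<Rightarrow> 'i set \<Rightarrow> ('i \<Rightarrow> 'i set) \<Rightarrow> ('i \<Rightarrow> 'a measure) \<Rightarrow> ('i \<Rightarrow> 'a measure) \<Rightarrow> bool" where
  "CND M N nu Mf F \<longleftrightarrow>
     (\<forall>A B. A \<subseteq> N - nbar nu B \<longrightarrow> B \<subseteq> N - nbar nu A \<longrightarrow>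
        cond_indep M (gen_sigma2 M F Mf A) (gen_sigma2 M F Mf B) (gen_sigma M Mf (nset nu A)))"

end

theory Submission
  imports Defs
begin

text \<open>Put \<open>C = \<nu>'(A) - \<nu>(A)\<close>. Because \<open>\<nu>\<close> is undirected and finer than \<open>\<nu>'\<close>, the sets \<open>A\<close>
  and \<open>B \<union> C\<close> are still separated for \<open>\<nu>\<close>, so CND for \<open>\<nu>\<close> makes \<open>F(A) \<or> M(A)\<close> and
  \<open>F(B \<union> C) \<or> M(B \<union> C)\<close> conditionally independent given \<open>M(\<nu>(A))\<close>. Since \<open>M(C)\<close> lies in
  the second \<sigma>-field, the weak union property of conditional independence moves it into the
  conditioning \<sigma>-field \<open>M(\<nu>(A)) \<or> M(C) = M(\<nu>'(A))\<close>, and shrinking the second \<sigma>-field to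
  \<open>F(B) \<or> M(B)\<close> is harmless. Weak union holds because
  \<open>E[1(X \<inter> Y) | H \<or> K] = E[1(X) | H] E[1(Y) | H \<or> K]\<close> can be checked on the \<pi>-system of
  rectangles \<open>D\<^sub>1 \<inter> D\<^sub>2\<close> with \<open>D\<^sub>1 \<in> H\<close>, \<open>D\<^sub>2 \<in> K\<close>, and then extends to \<open>H \<or> K\<close> by Dynkin's
  \<pi>-\<lambda> theorem.\<close>

lemma integral_indicator_eq_on_sigma_sets:
  fixes f g :: "'a \<Rightarrow> real"
  assumes "finite_measure M" "integrable M f" "integrable M g"
    and P: "Int_stable P" "P \<subseteq> sets M" "space M \<in> P"
    and eq: "\<And>D. D \<in> P \<Longrightarrow> (\<integral>x. indicator D x * f x \<partial>M) = (\<integral>x. indicator D x * g x \<partial>M)"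
    and D: "D \<in> sigma_sets (space M) P"
  shows "(\<integral>x. indicator D x * f x \<partial>M) = (\<integral>x. indicator D x * g x \<partial>M)"
proof -
  have P_Pow: "P \<subseteq> Pow (space M)" using P(2) sets.space_closed by blast
  from P(1) P_Pow D show ?thesis
  proof (induction rule: sigma_sets_induct_disjoint)
    case (basic A)
    then show ?case by (rule eq)
  next
    case empty
    then show ?case by simp
  next
    case (compl A)
    have A: "A \<in> sets M" using compl.hyps P(2) sets.sigma_sets_subset by blast
    have split: "(\<integral>x. indicator (space M - A) x * h x \<partial>M)
        = (\<integral>x. indicator (space M) x * h x \<partial>M) - (\<integral>x. indicator A x * h x \<partial>M)"
      if "integrable M h" for h :: "'a \<Rightarrow> real"
    proof -
      have "(\<integral>x. indicator (space M - A) x * h x \<partial>M)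
          = (\<integral>x. indicator (space M) x * h x - indicator A x * h x \<partial>M)"
        using sets.sets_into_space[OF A] by (intro Bochner_Integration.integral_cong) (auto simp: indicator_def)
      also have "\<dots> = (\<integral>x. indicator (space M) x * h x \<partial>M) - (\<integral>x. indicator A x * h x \<partial>M)"
        using that A integrable_mult_indicator[of _ M h] by (intro Bochner_Integration.integral_diff) auto
      finally show ?thesis .
    qed
    show ?case
      using split[OF assms(2)] split[OF assms(3)] eq[OF P(3)] compl.IH by simp
  next
    case (union A)
    have A: "range A \<subseteq> sets M" using union.hyps P(2) sets.sigma_sets_subset by blast
    have "(\<integral>x. indicator (\<Union>i. A i) x * h x \<partial>M) = (\<Sum>i. \<integral>x. indicator (A i) x * h x \<partial>M)"
      if "integrable M h" for h :: "'a \<Rightarrow> real"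
      using lebesgue_integral_countable_add[of A M h] A union.hyps(1) that
        integrable_mult_indicator[of "\<Union>i. A i" M h]
      by (auto simp: set_lebesgue_integral_def set_integrable_def disjoint_family_on_def)
    then show ?case
      using assms(2,3) union.IH by simp
  qed
qed

lemma real_cond_exp_indicator_bounds:
  assumes "prob_space M" "subalgebra M H" "X \<in> sets M"
  shows "AE x in M. 0 \<le> real_cond_exp M H (indicator X) x \<and> real_cond_exp M H (indicator X) x \<le> 1"
proof -
  interpret prob_space M by fact
  interpret finite_measure_subalgebra M H using assms(2) by unfold_locales
  have "integrable M (indicator X :: 'a \<Rightarrow> real)"
    using assms(3) by (intro integrable_real_indicator) (auto simp: less_top[symmetric])
  then have "AE x in M. real_cond_exp M H (indicator X) x \<le> 1"
    by (rule real_cond_exp_le_c) (auto simp: indicator_def)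
  moreover have "AE x in M. 0 \<le> real_cond_exp M H (indicator X) x"
    using assms(3) by (intro real_cond_exp_pos) auto
  ultimately show ?thesis by eventually_elim auto
qed

lemma
  assumes "subalgebra M H" "subalgebra M K"
  shows sets_sigma_Un_subalgebras: "sets (sigma (space M) (sets H \<union> sets K)) = sigma_sets (space M) (sets H \<union> sets K)"
    and subalgebra_sigma_Un: "subalgebra M (sigma (space M) (sets H \<union> sets K))"
    and subalgebra_sigma_Un_left: "subalgebra (sigma (space M) (sets H \<union> sets K)) H"
proof -
  have HK: "sets H \<union> sets K \<subseteq> sets M" using assms by (auto simp: subalgebra_def)
  have Pow: "sets H \<union> sets K \<subseteq> Pow (space M)" using HK sets.space_closed by blast
  then show sets_HK: "sets (sigma (space M) (sets H \<union> sets K)) = sigma_sets (space M) (sets H \<union> sets K)"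
    by simp
  show "subalgebra M (sigma (space M) (sets H \<union> sets K))"
    unfolding subalgebra_def sets_HK using sets.sigma_sets_subset[OF HK] Pow by simp
  show "subalgebra (sigma (space M) (sets H \<union> sets K)) H"
    unfolding subalgebra_def sets_HK using assms(1) Pow by (auto simp: subalgebra_def)
qed

definition rectangles :: "'a measure \<Rightarrow> 'a measure \<Rightarrow> 'a set set" where
  "rectangles H K = {D1 \<inter> D2 | D1 D2. D1 \<in> sets H \<and> D2 \<in> sets K}"

lemma Int_stable_rectangles: "Int_stable (rectangles H K)"
  unfolding Int_stable_def rectangles_def
proof clarify
  fix D1 D2 E1 E2 assume "D1 \<in> sets H" "D2 \<in> sets K" "E1 \<in> sets H" "E2 \<in> sets K"
  then show "\<exists>F1 F2. D1 \<inter> D2 \<inter> (E1 \<inter> E2) = F1 \<inter> F2 \<and> F1 \<in> sets H \<and> F2 \<in> sets K"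
    by (intro exI[of _ "D1 \<inter> E1"] exI[of _ "D2 \<inter> E2"]) auto
qed

lemma
  assumes "subalgebra M H" "subalgebra M K"
  shows rectangles_subset_sets: "rectangles H K \<subseteq> sets M"
    and space_in_rectangles: "space M \<in> rectangles H K"
    and sets_sigma_Un_subset_rectangles:
      "sets (sigma (space M) (sets H \<union> sets K)) \<subseteq> sigma_sets (space M) (rectangles H K)"
proof -
  have H_M: "sets H \<subseteq> sets M" and K_M: "sets K \<subseteq> sets M"
    and space: "space H = space M" "space K = space M"
    using assms by (auto simp: subalgebra_def)
  then show "rectangles H K \<subseteq> sets M" by (auto simp: rectangles_def)
  have H_rect: "sets H \<subseteq> rectangles H K"
  proof
    fix D assume D: "D \<in> sets H"
    then have "D = D \<inter> space M" using H_M sets.sets_into_space by blast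
    with D show "D \<in> rectangles H K" unfolding rectangles_def using sets.top[of K] space by auto
  qed
  then show "space M \<in> rectangles H K" using sets.top[of H] space by auto
  have "sets K \<subseteq> rectangles H K"
  proof
    fix D assume D: "D \<in> sets K"
    then have "D = space M \<inter> D" using K_M sets.sets_into_space by blast
    with D show "D \<in> rectangles H K" unfolding rectangles_def using sets.top[of H] space by auto
  qed
  with H_rect show "sets (sigma (space M) (sets H \<union> sets K)) \<subseteq> sigma_sets (space M) (rectangles H K)"
    unfolding sets_sigma_Un_subalgebras[OF assms] by (intro sigma_sets_subseteq) auto
qed

context
  fixes M G1 G2 H K :: "'a measure"
  assumes prob: "prob_space M"
    and sub_G1: "subalgebra M G1" and sub_G2: "subalgebra M G2"
    and sub_H: "subalgebra M H" and sub_K: "subalgebra M K"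
    and K_G2: "sets K \<subseteq> sets G2"
    and cond_indep: "cond_indep M G1 G2 H"
begin

lemma cond_indep_integral_rectangle:
  assumes X: "X \<in> sets G1" and Y: "Y \<in> sets G2" and D1: "D1 \<in> sets H" and D2: "D2 \<in> sets K"
  shows "(\<integral>x. indicator (D1 \<inter> D2) x * indicator (X \<inter> Y) x \<partial>M)
       = (\<integral>x. indicator (D1 \<inter> D2) x * (real_cond_exp M H (indicator X) x
                * real_cond_exp M (sigma (space M) (sets H \<union> sets K)) (indicator Y) x) \<partial>M)"
proof -
  interpret prob_space M by (rule prob)
  interpret H: finite_measure_subalgebra M H using sub_H by unfold_locales
  define HK where "HK = sigma (space M) (sets H \<union> sets K)"
  interpret HK: finite_measure_subalgebra M HK
    unfolding HK_def using subalgebra_sigma_Un[OF sub_H sub_K] by unfold_locales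
  have H_HK: "subalgebra HK H"
    unfolding HK_def by (rule subalgebra_sigma_Un_left[OF sub_H sub_K])
  have K_HK: "sets K \<subseteq> sets HK"
    using sets_sigma_Un_subalgebras[OF sub_H sub_K] by (auto simp: HK_def)
  have [measurable]: "X \<in> sets M" "Y \<in> sets M" "D1 \<in> sets M" "D2 \<in> sets M"
    using X Y D1 D2 sub_G1 sub_G2 sub_H sub_K by (auto simp: subalgebra_def)
  have [measurable]: "D1 \<in> sets H" "D1 \<in> sets HK" "D2 \<in> sets HK"
    using D1 D2 H_HK K_HK by (auto simp: subalgebra_def)
  define h where "h = real_cond_exp M H (indicator X)"
  define k where "k = real_cond_exp M H (indicator (Y \<inter> D2))"
  have h_H [measurable]: "h \<in> borel_measurable H" and [measurable]: "h \<in> borel_measurable M"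
    unfolding h_def by simp_all
  have [measurable]: "h \<in> borel_measurable HK" by (rule measurable_from_subalg[OF H_HK h_H])
  have "AE x in M. 0 \<le> h x \<and> h x \<le> 1"
    unfolding h_def by (rule real_cond_exp_indicator_bounds[OF prob sub_H]) simp
  then have h_indicator_bound: "AE x in M. \<bar>indicator A x * h x\<bar> \<le> 1" for A :: "'a set"
    by eventually_elim (auto simp: indicator_def)
  have integrable: "integrable M (\<lambda>x. u x * indicator B x)"
    if [measurable]: "u \<in> borel_measurable M" "B \<in> sets M" and "AE x in M. \<bar>u x\<bar> \<le> 1"
    for u :: "'a \<Rightarrow> real" and B
    by (rule integrable_const_bound[where B=1]) (use that(3) in \<open>auto simp: indicator_def\<close>)
  have factor: "AE x in M. real_cond_exp M H (indicator (X \<inter> (Y \<inter> D2))) x = h x * k x"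
    using cond_indep X Y D2 K_G2 unfolding cond_indep_def h_def k_def by blast
  have "(\<integral>x. indicator (D1 \<inter> D2) x * indicator (X \<inter> Y) x \<partial>M)
      = (\<integral>x. indicator D1 x * indicator (X \<inter> (Y \<inter> D2)) x \<partial>M :: real)"
    by (intro Bochner_Integration.integral_cong) (auto simp: indicator_def)
  also have "\<dots> = (\<integral>x. indicator D1 x * real_cond_exp M H (indicator (X \<inter> (Y \<inter> D2))) x \<partial>M)"
    by (rule H.real_cond_exp_intg(2)[symmetric]) (auto intro!: integrable)
  also have "\<dots> = (\<integral>x. (indicator D1 x * h x) * k x \<partial>M)"
    using factor by (intro integral_cong_AE) (auto simp: k_def)
  also have "\<dots> = (\<integral>x. (indicator D1 x * h x) * indicator (Y \<inter> D2) x \<partial>M)"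
    unfolding k_def
    by (rule H.real_cond_exp_intg(2)) (auto intro!: integrable h_indicator_bound)
  also have "\<dots> = (\<integral>x. (indicator (D1 \<inter> D2) x * h x) * indicator Y x \<partial>M)"
    by (intro Bochner_Integration.integral_cong) (auto simp: indicator_def)
  also have "\<dots> = (\<integral>x. (indicator (D1 \<inter> D2) x * h x) * real_cond_exp M HK (indicator Y) x \<partial>M)"
    by (rule HK.real_cond_exp_intg(2)[symmetric])
      (auto intro!: integrable h_indicator_bound)
  finally show ?thesis
    unfolding h_def HK_def by (simp only: mult.assoc)
qed

lemma real_cond_exp_sigma_Un_indicator_Int:
  assumes X: "X \<in> sets G1" and Y: "Y \<in> sets G2"
  shows "AE x in M. real_cond_exp M (sigma (space M) (sets H \<union> sets K)) (indicator (X \<inter> Y)) x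
       = real_cond_exp M H (indicator X) x
         * real_cond_exp M (sigma (space M) (sets H \<union> sets K)) (indicator Y) x"
proof -
  interpret prob_space M by (rule prob)
  define HK where "HK = sigma (space M) (sets H \<union> sets K)"
  interpret HK: finite_measure_subalgebra M HK
    unfolding HK_def using subalgebra_sigma_Un[OF sub_H sub_K] by unfold_locales
  define h where "h = real_cond_exp M H (indicator X)"
  define e where "e = real_cond_exp M HK (indicator Y)"
  have [measurable]: "X \<in> sets M" "Y \<in> sets M"
    using X Y sub_G1 sub_G2 by (auto simp: subalgebra_def)
  have "h \<in> borel_measurable H" unfolding h_def by simp
  then have [measurable]: "h \<in> borel_measurable HK"
    unfolding HK_def by (rule measurable_from_subalg[OF subalgebra_sigma_Un_left[OF sub_H sub_K]])
  have [measurable]: "e \<in> borel_measurable HK" unfolding e_def by simp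
  have [measurable]: "h \<in> borel_measurable M" "e \<in> borel_measurable M"
    unfolding h_def e_def by simp_all
  have "AE x in M. 0 \<le> h x \<and> h x \<le> 1"
    unfolding h_def by (rule real_cond_exp_indicator_bounds[OF prob sub_H]) simp
  moreover have "AE x in M. 0 \<le> e x \<and> e x \<le> 1"
    unfolding e_def by (rule real_cond_exp_indicator_bounds[OF prob HK.subalg]) simp
  ultimately have "AE x in M. norm (h x * e x) \<le> 1"
    by eventually_elim (auto simp: abs_mult intro: mult_le_one)
  then have integrable_he: "integrable M (\<lambda>x. h x * e x)"
    by (rule integrable_const_bound) measurable
  have integrable_XY: "integrable M (indicator (X \<inter> Y) :: 'a \<Rightarrow> real)"
    by (intro integrable_real_indicator) (auto simp: less_top[symmetric])
  have rectangle_eq: "(\<integral>x. indicator D x * indicator (X \<inter> Y) x \<partial>M) = (\<integral>x. indicator D x * (h x * e x) \<partial>M)"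
    if "D \<in> rectangles H K" for D
    using that cond_indep_integral_rectangle[OF X Y] unfolding rectangles_def h_def e_def HK_def by auto
  have "(\<integral>x. indicator A x * indicator (X \<inter> Y) x \<partial>M) = (\<integral>x. indicator A x * (h x * e x) \<partial>M)"
    if "A \<in> sets HK" for A
    using integral_indicator_eq_on_sigma_sets[OF finite_measure_axioms integrable_XY integrable_he
          Int_stable_rectangles rectangles_subset_sets[OF sub_H sub_K] space_in_rectangles[OF sub_H sub_K]
          rectangle_eq] that sets_sigma_Un_subset_rectangles[OF sub_H sub_K]
    unfolding HK_def by blast
  then have "(\<integral>x\<in>A. indicator (X \<inter> Y) x \<partial>M) = (\<integral>x\<in>A. h x * e x \<partial>M)" if "A \<in> sets HK" for A
    using that by (simp add: set_lebesgue_integral_def)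
  then have "AE x in M. real_cond_exp M HK (indicator (X \<inter> Y)) x = h x * e x"
    using integrable_XY integrable_he by (intro HK.real_cond_exp_charact) auto
  then show ?thesis by (simp add: h_def e_def HK_def)
qed

lemma cond_indep_weak_union:
  assumes G3_G2: "sets G3 \<subseteq> sets G2"
  shows "cond_indep M G1 G3 (sigma (space M) (sets H \<union> sets K))"
  unfolding cond_indep_def
proof (intro ballI)
  fix X Y assume X: "X \<in> sets G1" and Y: "Y \<in> sets G3"
  interpret prob_space M by (rule prob)
  define HK where "HK = sigma (space M) (sets H \<union> sets K)"
  interpret HK: finite_measure_subalgebra M HK
    unfolding HK_def using subalgebra_sigma_Un[OF sub_H sub_K] by unfold_locales
  have X_space: "X \<inter> space M = X" using X sub_G1 sets.sets_into_space by (auto simp: subalgebra_def)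
  have space_G2: "space M \<in> sets G2" using sub_G2 sets.top[of G2] by (simp add: subalgebra_def)
  have space_HK: "space M \<in> sets HK" using HK.subalg sets.top[of HK] by (simp add: subalgebra_def)
  have product: "AE x in M. real_cond_exp M HK (indicator (X \<inter> Y)) x
      = real_cond_exp M H (indicator X) x * real_cond_exp M HK (indicator Y) x"
    using real_cond_exp_sigma_Un_indicator_Int[OF X] Y G3_G2 by (auto simp: HK_def)
  have "AE x in M. real_cond_exp M HK (indicator X) x
      = real_cond_exp M H (indicator X) x * real_cond_exp M HK (indicator (space M)) x"
    using real_cond_exp_sigma_Un_indicator_Int[OF X space_G2] X_space by (simp add: HK_def)
  moreover have "AE x in M. real_cond_exp M HK (indicator (space M)) x = indicator (space M) x"
    using space_HK
    by (intro HK.real_cond_exp_F_meas integrable_real_indicator) (auto simp: less_top[symmetric])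
  ultimately have "AE x in M. real_cond_exp M HK (indicator X) x = real_cond_exp M H (indicator X) x"
    using AE_space by eventually_elim simp
  with product show "AE x in M. real_cond_exp M HK (indicator (X \<inter> Y)) x
      = real_cond_exp M HK (indicator X) x * real_cond_exp M HK (indicator Y) x"
    by eventually_elim simp
qed

end

lemma
  assumes "\<forall>i\<in>S. subalgebra M (Mf i)"
  shows sets_gen_sigma: "sets (gen_sigma M Mf S) = sigma_sets (space M) (\<Union>i\<in>S. sets (Mf i))"
    and subalgebra_gen_sigma: "subalgebra M (gen_sigma M Mf S)"
proof -
  have gen_M: "(\<Union>i\<in>S. sets (Mf i)) \<subseteq> sets M" using assms by (auto simp: subalgebra_def)
  then have "(\<Union>i\<in>S. sets (Mf i)) \<subseteq> Pow (space M)" using sets.space_closed by blast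
  then have sets_eq: "sets (gen_sigma M Mf S) = sigma_sets (space M) (\<Union>i\<in>S. sets (Mf i))"
    and space_eq: "space (gen_sigma M Mf S) = space M"
    unfolding gen_sigma_def by simp_all
  show "sets (gen_sigma M Mf S) = sigma_sets (space M) (\<Union>i\<in>S. sets (Mf i))" by (rule sets_eq)
  show "subalgebra M (gen_sigma M Mf S)"
    unfolding subalgebra_def using sets_eq space_eq sets.sigma_sets_subset[OF gen_M] by simp
qed

lemma
  assumes "\<forall>i\<in>S. subalgebra M (F i)" "\<forall>i\<in>S. subalgebra M (Mf i)"
  shows sets_gen_sigma2: "sets (gen_sigma2 M F Mf S) = sigma_sets (space M) (\<Union>i\<in>S. sets (F i) \<union> sets (Mf i))"
    and subalgebra_gen_sigma2: "subalgebra M (gen_sigma2 M F Mf S)"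
proof -
  have gen_M: "(\<Union>i\<in>S. sets (F i) \<union> sets (Mf i)) \<subseteq> sets M" using assms by (auto simp: subalgebra_def)
  then have "(\<Union>i\<in>S. sets (F i) \<union> sets (Mf i)) \<subseteq> Pow (space M)" using sets.space_closed by blast
  then have sets_eq: "sets (gen_sigma2 M F Mf S) = sigma_sets (space M) (\<Union>i\<in>S. sets (F i) \<union> sets (Mf i))"
    and space_eq: "space (gen_sigma2 M F Mf S) = space M"
    unfolding gen_sigma2_def by simp_all
  show "sets (gen_sigma2 M F Mf S) = sigma_sets (space M) (\<Union>i\<in>S. sets (F i) \<union> sets (Mf i))" by (rule sets_eq)
  show "subalgebra M (gen_sigma2 M F Mf S)"
    unfolding subalgebra_def using sets_eq space_eq sets.sigma_sets_subset[OF gen_M] by simp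
qed

lemma sets_gen_sigma2_mono:
  assumes "S \<subseteq> T" "\<forall>i\<in>T. subalgebra M (F i)" "\<forall>i\<in>T. subalgebra M (Mf i)"
  shows "sets (gen_sigma2 M F Mf S) \<subseteq> sets (gen_sigma2 M F Mf T)"
proof -
  have sub_S: "\<forall>i\<in>S. subalgebra M (F i)" "\<forall>i\<in>S. subalgebra M (Mf i)" using assms by auto
  show ?thesis
    unfolding sets_gen_sigma2[OF assms(2,3)] sets_gen_sigma2[OF sub_S]
    by (intro sigma_sets_subseteq) (use assms(1) in auto)
qed

lemma sets_gen_sigma_subset_gen_sigma2:
  assumes "S \<subseteq> T" "\<forall>i\<in>T. subalgebra M (F i)" "\<forall>i\<in>T. subalgebra M (Mf i)"
  shows "sets (gen_sigma M Mf S) \<subseteq> sets (gen_sigma2 M F Mf T)"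
proof -
  have sub_S: "\<forall>i\<in>S. subalgebra M (Mf i)" using assms by auto
  show ?thesis
    unfolding sets_gen_sigma2[OF assms(2,3)] sets_gen_sigma[OF sub_S]
    by (intro sigma_sets_subseteq) (use assms(1) in auto)
qed

lemma gen_sigma_Un:
  assumes "\<forall>i\<in>S \<union> T. subalgebra M (Mf i)"
  shows "gen_sigma M Mf (S \<union> T) = sigma (space M) (sets (gen_sigma M Mf S) \<union> sets (gen_sigma M Mf T))"
proof -
  let ?U = "\<lambda>S. \<Union>i\<in>S. sets (Mf i)"
  have Pow: "?U S' \<subseteq> Pow (space M)" if "S' \<subseteq> S \<union> T" for S'
    using assms that sets.space_closed by (fastforce simp: subalgebra_def)
  have "sigma_sets (space M) (?U (S \<union> T))
      = sigma_sets (space M) (sigma_sets (space M) (?U S) \<union> sigma_sets (space M) (?U T))"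
  proof (rule equalityI)
    show "sigma_sets (space M) (?U (S \<union> T))
        \<subseteq> sigma_sets (space M) (sigma_sets (space M) (?U S) \<union> sigma_sets (space M) (?U T))"
      by (rule sigma_sets_subseteq) auto
    show "sigma_sets (space M) (sigma_sets (space M) (?U S) \<union> sigma_sets (space M) (?U T))
        \<subseteq> sigma_sets (space M) (?U (S \<union> T))"
      by (intro sigma_sets_mono Un_least sigma_sets_subseteq) auto
  qed
  moreover have "sets (gen_sigma M Mf S') = sigma_sets (space M) (?U S')" if "S' \<subseteq> S \<union> T" for S'
    using assms that by (intro sets_gen_sigma) auto
  moreover have "sigma_sets (space M) (?U S') \<subseteq> Pow (space M)" if "S' \<subseteq> S \<union> T" for S'
    using sigma_sets_into_sp[OF Pow[OF that]] by blast
  ultimately show ?thesis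
    unfolding gen_sigma_def[of M Mf "S \<union> T"] using Pow[of "S \<union> T"]
    by (intro sigma_eqI) auto
qed

lemma nset_mono:
  assumes "\<forall>i\<in>A. nu i \<subseteq> nu' i"
  shows "nset nu A \<subseteq> nset nu' A"
  using assms by (auto simp: nset_def nbar_def)

lemma separated_Un_coarse_boundary:
  assumes nu': "nbhd_system N nu'" and finer: "\<forall>i\<in>N. nu i \<subseteq> nu' i"
    and undirected: "undirected N nu"
    and AB: "A \<subseteq> N - nbar nu' B" and BA: "B \<subseteq> N - nbar nu' A"
  defines "C \<equiv> nset nu' A - nset nu A"
  shows "A \<subseteq> N - nbar nu (B \<union> C)" and "B \<union> C \<subseteq> N - nbar nu A"
proof -
  have C_N: "C \<subseteq> N" using nu' AB by (auto simp: C_def nset_def nbar_def nbhd_system_def)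
  show "A \<subseteq> N - nbar nu (B \<union> C)"
  proof
    fix a assume a: "a \<in> A"
    have "a \<notin> nu c" if "c \<in> C" for c
    proof
      assume "a \<in> nu c"
      then have "c \<in> nu a" using undirected a AB C_N that by (auto simp: undirected_def)
      with a that show False by (auto simp: C_def nset_def nbar_def)
    qed
    moreover have "a \<notin> nu b" if "b \<in> B" for b
    proof -
      have "nu b \<subseteq> nu' b" using that BA finer by auto
      then show ?thesis using that a AB by (auto simp: nbar_def)
    qed
    moreover have "a \<notin> C" "a \<notin> B" "a \<in> N" using a AB BA by (auto simp: C_def nset_def nbar_def)
    ultimately show "a \<in> N - nbar nu (B \<union> C)" by (auto simp: nbar_def)
  qed
  have "nbar nu A \<subseteq> nbar nu' A" using AB finer by (fastforce simp: nbar_def)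
  then show "B \<union> C \<subseteq> N - nbar nu A"
    using BA C_N by (auto simp: C_def nset_def)
qed

theorem lemma2p1:
  fixes M :: "'a measure" and N :: "'i set" and nu nu' :: "'i \<Rightarrow> 'i set"
    and F Mf :: "'i \<Rightarrow> 'a measure"
  assumes "prob_space M"
    and "finite N"
    and "nbhd_system N nu" and "nbhd_system N nu'"
    and "\<forall>i\<in>N. nu i \<subseteq> nu' i"
    and "undirected N nu"
    and "\<forall>i\<in>N. subalgebra M (F i)"
    and "\<forall>i\<in>N. subalgebra M (Mf i)"
    and "CND M N nu Mf F"
  shows "CND M N nu' Mf F"
  unfolding CND_def
proof (intro allI impI)
  fix A B assume AB: "A \<subseteq> N - nbar nu' B" and BA: "B \<subseteq> N - nbar nu' A"
  define C where "C = nset nu' A - nset nu A"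
  note separated = separated_Un_coarse_boundary[OF assms(4,5,6) AB BA, folded C_def]
  have C_N: "C \<subseteq> N" and nset_N: "nset nu' A \<subseteq> N"
    using assms(4) AB by (auto simp: C_def nset_def nbar_def nbhd_system_def)
  have sub_F: "\<forall>i\<in>S. subalgebra M (F i)" and sub_Mf: "\<forall>i\<in>S. subalgebra M (Mf i)" if "S \<subseteq> N" for S
    using assms(7,8) that by auto
  have nset_A_subset: "nset nu A \<subseteq> nset nu' A" using AB assms(5) by (intro nset_mono) auto
  have BC_N: "B \<union> C \<subseteq> N" and A_N: "A \<subseteq> N" and nset_A_N: "nset nu A \<subseteq> N"
    using AB BA C_N nset_N nset_A_subset by auto
  have K_G2: "sets (gen_sigma M Mf C) \<subseteq> sets (gen_sigma2 M F Mf (B \<union> C))"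
    using sub_F[OF BC_N] sub_Mf[OF BC_N] by (intro sets_gen_sigma_subset_gen_sigma2) auto
  have G3_G2: "sets (gen_sigma2 M F Mf B) \<subseteq> sets (gen_sigma2 M F Mf (B \<union> C))"
    using sub_F[OF BC_N] sub_Mf[OF BC_N] by (intro sets_gen_sigma2_mono) auto
  have "cond_indep M (gen_sigma2 M F Mf A) (gen_sigma2 M F Mf (B \<union> C)) (gen_sigma M Mf (nset nu A))"
    using assms(9) separated unfolding CND_def by blast
  then have "cond_indep M (gen_sigma2 M F Mf A) (gen_sigma2 M F Mf B)
      (sigma (space M) (sets (gen_sigma M Mf (nset nu A)) \<union> sets (gen_sigma M Mf C)))"
    using sub_F sub_Mf A_N BC_N nset_A_N C_N
    by (intro cond_indep_weak_union[OF assms(1) _ _ _ _ K_G2 _ G3_G2]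
        subalgebra_gen_sigma subalgebra_gen_sigma2)
  moreover have "nset nu' A = nset nu A \<union> C"
    using nset_A_subset by (auto simp: C_def)
  ultimately show "cond_indep M (gen_sigma2 M F Mf A) (gen_sigma2 M F Mf B) (gen_sigma M Mf (nset nu' A))"
    using gen_sigma_Un[OF sub_Mf] nset_N by simp
qed

end
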